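(* (a) Let $\alpha:(-\epsilon,\epsilon)\to M^1$, $x\mapsto(z(x),\zeta(x))$, be a smooth embedding satisfying $z(0)=0$, $z(x)\neq0$ for all $x\neq0$, and $(z(-x),\zeta(-x))=(-z(x),\zeta(x))$ for all $x$, and let $c=\{\zeta(x)\mid x\in(-\epsilon,\epsilon)\}\subset\mathbb{C}$. Then the map $\eta:[0,\epsilon^2)\to c$, $x\mapsto\zeta(\sqrt{x})$, is a diffeomorphism, so $c$ is a regular curve with boundary $\partial c=\{\zeta(0)\}$. (b) Let $\gamma:S^1\to M^1$, $u\mapsto(z(u),\zeta(u))$, be a symmetric circle. Then $c=\{\zeta(u)\mid u\in S^1\}\subset\mathbb{C}$ is a regular curve with boundary $\partial c=\{\zeta(0),\zeta(\pi)\}$.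
   Context: $f$ is a complex polynomial in one variable all of whose zeros are simple, and $M^1=\{(z,\zeta)\in\mathbb{C}^2\mid z^2=f(\zeta)\}$. $S^1=\mathbb{R}/2\pi\mathbb{Z}$. A symmetric circle is a smooth embedding $\gamma:S^1\to M^1$, $u\mapsto(z(u),\zeta(u))$, such that $(z(-u),\zeta(-u))=(-z(u),\zeta(u))$ for all $u$ and $z(u)\neq0$ for all $u\neq0,\pi$. *)

theory Defs
  imports "HOL-Analysis.Analysis" "HOL-Computational_Algebra.Polynomial"
begin

definition M1 :: "complex poly \<Rightarrow> (complex \<times> complex) set" where
  "M1 f = {(z, w). z ^ 2 = poly f w}"

definition simple_zeros :: "complex poly \<Rightarrow> bool" where
  "simple_zeros f \<longleftrightarrow> (\<forall>a. poly f a = 0 \<longrightarrow> poly (pderiv f) a \<noteq> 0)"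

text \<open>C^\<infinity> on a real interval I (one-sided derivatives at endpoints belonging to I).\<close>
definition smooth_on :: "real set \<Rightarrow> (real \<Rightarrow> 'a::real_normed_vector) \<Rightarrow> bool" where
  "smooth_on I g \<longleftrightarrow> (\<exists>D :: nat \<Rightarrow> real \<Rightarrow> 'a.
      (\<forall>x\<in>I. D 0 x = g x) \<and>
      (\<forall>n. \<forall>x\<in>I. (D n has_vector_derivative D (Suc n) x) (at x within I)))"

definition smooth_embedding :: "real set \<Rightarrow> (real \<Rightarrow> 'a::real_normed_vector) \<Rightarrow> bool" where
  "smooth_embedding I g \<longleftrightarrow> smooth_on I g \<and>
      (\<forall>x\<in>I. vector_derivative g (at x within I) \<noteq> 0) \<and>
      inj_on g I \<and> (\<exists>h. homeomorphism I (g ` I) g h)"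

definition regular_curve_with_boundary :: "complex set \<Rightarrow> complex set \<Rightarrow> bool" where
  "regular_curve_with_boundary c B \<longleftrightarrow> B \<subseteq> c \<and>
     (\<forall>p\<in>c. \<exists>U \<phi>. open U \<and> p \<in> U \<and> \<phi> 0 = p \<and>
        (let I = (if p \<in> B then {0..<1} else {-1<..<1}) in
           smooth_embedding I \<phi> \<and> \<phi> ` I = c \<inter> U))"

text \<open>Symmetric circle: gamma = (z, zeta) viewed as a 2pi-periodic function on R (S^1 = R/2piZ).\<close>
definition symmetric_circle :: "complex poly \<Rightarrow> (real \<Rightarrow> complex) \<Rightarrow> (real \<Rightarrow> complex) \<Rightarrow> bool" where
  "symmetric_circle f z w \<longleftrightarrow>
     (\<forall>u. z (u + 2 * pi) = z u \<and> w (u + 2 * pi) = w u) \<and>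
     smooth_on UNIV (\<lambda>u. (z u, w u)) \<and>
     (\<forall>u. vector_derivative (\<lambda>u. (z u, w u)) (at u) \<noteq> 0) \<and>
     inj_on (\<lambda>u. (z u, w u)) {0..<2 * pi} \<and>
     (\<forall>u. (z u, w u) \<in> M1 f) \<and>
     (\<forall>u. z (- u) = - z u \<and> w (- u) = w u) \<and>
     (\<forall>u. (\<forall>k::int. u \<noteq> of_int k * pi) \<longrightarrow> z u \<noteq> 0)"

end

theory Submission
  imports Defs "HOL-Library.Periodic_Fun"
begin

text \<open>
  On \<open>M\<^sup>1\<close> we have \<open>z\<^sup>2 = f w\<close>, hence \<open>2 z z' = w' f'(w)\<close> along any curve. Where \<open>z \<noteq> 0\<close>
  this forces \<open>w' \<noteq> 0\<close>, so \<open>w\<close> itself is an immersion. At a zero of \<open>z\<close> the symmetry makes \<open>w\<close>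
  even, so \<open>w' = 0\<close>, \<open>z' \<noteq> 0\<close>, and differentiating once more gives \<open>2 z'\<^sup>2 = w'' f'(w)\<close>,
  whence \<open>w'' \<noteq> 0\<close>. A smooth even function is a smooth function of \<open>t\<^sup>2\<close> (proved here by
  iterating Hadamard's lemma), so \<open>\<eta> x = w (sqrt x)\<close> is smooth on \<open>[0, \<epsilon>\<^sup>2)\<close> with
  \<open>\<eta>'(0) = w''(0)/2 \<noteq> 0\<close>. The fibre of \<open>(z, w) \<mapsto> w\<close> over a point of the curve is
  \<open>{(z, w), (-z, w)}\<close>, so \<open>\<eta>\<close> is injective, and its inverse is continuous because \<open>z\<close> is
  determined by \<open>w\<close> up to sign. Affine reparametrisations of \<open>\<eta>\<close> are the charts of \<open>c\<close>.
  A symmetric circle maps \<open>[0, \<pi>]\<close> homeomorphically onto \<open>c\<close> by \<open>w\<close>; on \<open>(0, \<pi>)\<close> the map \<open>w\<close> is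
  an immersion, and the ends \<open>0\<close> and \<open>\<pi>\<close> are zeros of \<open>z\<close> of the kind just described, so
  \<open>w (sqrt x)\<close> and \<open>w (\<pi> - sqrt x)\<close> give the boundary charts.
\<close>

section \<open>Towers of derivatives\<close>

definition deriv_tower :: "real set \<Rightarrow> (nat \<Rightarrow> real \<Rightarrow> 'a::real_normed_vector) \<Rightarrow> bool" where
  "deriv_tower I D \<longleftrightarrow> (\<forall>n. \<forall>x\<in>I. (D n has_vector_derivative D (Suc n) x) (at x within I))"

lemma smooth_on_iff_deriv_tower: "smooth_on I g \<longleftrightarrow> (\<exists>D. deriv_tower I D \<and> (\<forall>x\<in>I. D 0 x = g x))"
  unfolding smooth_on_def deriv_tower_def by blast

lemma deriv_tower_at:
  assumes "deriv_tower J D" "open J" "x \<in> J"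
  shows "(D n has_vector_derivative D (Suc n) x) (at x)"
  using assms unfolding deriv_tower_def by (metis at_within_open)

lemma deriv_tower_continuous_on: "deriv_tower J D \<Longrightarrow> continuous_on J (D n)"
  unfolding deriv_tower_def
  by (meson continuous_on_eq_continuous_within has_vector_derivative_continuous)

lemma deriv_tower_shift: "deriv_tower J D \<Longrightarrow> deriv_tower J (\<lambda>n. D (Suc n))"
  unfolding deriv_tower_def by blast

lemma deriv_tower_scaleR: "deriv_tower J D \<Longrightarrow> deriv_tower J (\<lambda>n t. c *\<^sub>R D n t)"
  unfolding deriv_tower_def
  by (blast intro: bounded_linear.has_vector_derivative[OF bounded_linear_scaleR_right])

lemma deriv_tower_subset: "deriv_tower I D \<Longrightarrow> J \<subseteq> I \<Longrightarrow> deriv_tower J D"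
  unfolding deriv_tower_def by (blast intro: has_vector_derivative_within_subset)

lemma deriv_tower_fst: "deriv_tower J D \<Longrightarrow> deriv_tower J (\<lambda>n t. fst (D n t))"
  unfolding deriv_tower_def by (blast intro: bounded_linear.has_vector_derivative[OF bounded_linear_fst])

lemma deriv_tower_snd: "deriv_tower J D \<Longrightarrow> deriv_tower J (\<lambda>n t. snd (D n t))"
  unfolding deriv_tower_def by (blast intro: bounded_linear.has_vector_derivative[OF bounded_linear_snd])

lemma deriv_tower_affine:
  assumes T: "deriv_tower K D" and A: "\<forall>t\<in>I. x0 + \<delta> * t \<in> K"
  shows "deriv_tower I (\<lambda>n t. (\<delta> ^ n) *\<^sub>R D n (x0 + \<delta> * t))"
  unfolding deriv_tower_def
proof (intro allI ballI)
  fix n t assume t: "t \<in> I"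
  let ?A = "\<lambda>t. x0 + \<delta> * t"
  have dA: "(?A has_vector_derivative \<delta>) (at t within I)"
    by (auto intro!: derivative_eq_intros simp: has_real_derivative_iff_has_vector_derivative[symmetric])
  have "(D n has_vector_derivative D (Suc n) (?A t)) (at (?A t) within K)"
    using T A t unfolding deriv_tower_def by blast
  hence "(D n has_vector_derivative D (Suc n) (?A t)) (at (?A t) within ?A ` I)"
    by (rule has_vector_derivative_within_subset) (use A in auto)
  from vector_diff_chain_within[OF dA this]
  have "((D n \<circ> ?A) has_vector_derivative \<delta> *\<^sub>R D (Suc n) (?A t)) (at t within I)" .
  from bounded_linear.has_vector_derivative[OF bounded_linear_scaleR_right this, of "\<delta> ^ n"]
  show "((\<lambda>t. \<delta> ^ n *\<^sub>R D n (?A t)) has_vector_derivative \<delta> ^ Suc n *\<^sub>R D (Suc n) (?A t))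
      (at t within I)"
    by (simp add: o_def mult.commute)
qed

lemma deriv_tower_first_derivative:
  assumes T: "deriv_tower I D" and g: "\<forall>x\<in>I. D 0 x = g x" and x: "x \<in> I"
  shows "(g has_vector_derivative D 1 x) (at x within I)"
proof -
  have "(D 0 has_vector_derivative D 1 x) (at x within I)" using T x unfolding deriv_tower_def by simp
  thus ?thesis by (rule has_vector_derivative_transform[OF x, rotated]) (use g in auto)
qed

section \<open>Hadamard's lemma and smooth even functions\<close>

lemma mult_mem_symmetric_interval:
  assumes "x \<in> {-a<..<a}" "s \<in> {0..1}"
  shows "s * x \<in> {-a<..<(a::real)}"
proof -
  have "\<bar>s * x\<bar> \<le> \<bar>x\<bar>" using assms(2) by (simp add: abs_mult mult_left_le_one_le)
  thus ?thesis using assms(1) by auto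
qed

lemma has_vector_derivative_comp_scale:
  assumes "(g has_vector_derivative g') (at (c * t))"
  shows "((\<lambda>t. g (c * t)) has_vector_derivative c *\<^sub>R g') (at t)"
proof -
  have "((\<lambda>t. c * t) has_vector_derivative c) (at t)"
    by (auto intro!: derivative_eq_intros simp: has_real_derivative_iff_has_vector_derivative[symmetric])
  from vector_diff_chain_at[OF this assms] show ?thesis by (simp add: o_def)
qed

definition hadamard_quotient :: "(nat \<Rightarrow> real \<Rightarrow> 'a::banach) \<Rightarrow> nat \<Rightarrow> real \<Rightarrow> 'a" where
  "hadamard_quotient D n t = integral {0..1} (\<lambda>s. (s ^ n) *\<^sub>R D (Suc n) (s * t))"

lemma deriv_tower_hadamard_quotient:
  fixes D :: "nat \<Rightarrow> real \<Rightarrow> 'a::banach"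
  assumes T: "deriv_tower {-a<..<a} D"
  shows "deriv_tower {-a<..<a} (hadamard_quotient D)"
  unfolding deriv_tower_def hadamard_quotient_def
proof (intro allI ballI)
  let ?J = "{-a<..<a}"
  fix n t assume t: "t \<in> ?J"
  have comp_cont: "continuous_on (?J \<times> {0..1}) (\<lambda>(t, s). (s ^ m) *\<^sub>R D k (s * t))" for m k
  proof -
    have "continuous_on (?J \<times> {0..1}) (\<lambda>p. D k (snd p * fst p))"
      by (rule continuous_on_compose2[OF deriv_tower_continuous_on[OF T]])
         (auto intro!: continuous_intros mult_mem_symmetric_interval)
    thus ?thesis by (auto simp: split_beta intro!: continuous_intros)
  qed
  have "((\<lambda>t. (s ^ n) *\<^sub>R D (Suc n) (s * t)) has_vector_derivative
      (s ^ Suc n) *\<^sub>R D (Suc (Suc n)) (s * t)) (at t within ?J)"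
    if "t \<in> ?J" "s \<in> {0..1}" for s t
  proof -
    have "(D (Suc n) has_vector_derivative D (Suc (Suc n)) (s * t)) (at (s * t))"
      using deriv_tower_at[OF T _ mult_mem_symmetric_interval[OF that]] by simp
    from has_vector_derivative_comp_scale[OF this]
    have "((\<lambda>t. D (Suc n) (s * t)) has_vector_derivative s *\<^sub>R D (Suc (Suc n)) (s * t)) (at t)" .
    from bounded_linear.has_vector_derivative[OF bounded_linear_scaleR_right this, of "s ^ n"]
    show ?thesis by (simp add: has_vector_derivative_at_within mult.commute)
  qed
  moreover have "(\<lambda>s. s ^ n *\<^sub>R D (Suc n) (s * x)) integrable_on {0..1}" if "x \<in> ?J" for x
  proof (rule integrable_continuous_interval)
    have "continuous_on {0..1} (\<lambda>s. D (Suc n) (s * x))"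
      by (rule continuous_on_compose2[OF deriv_tower_continuous_on[OF T]])
         (auto intro!: continuous_intros mult_mem_symmetric_interval that)
    thus "continuous_on {0..1} (\<lambda>s. s ^ n *\<^sub>R D (Suc n) (s * x))" by (auto intro!: continuous_intros)
  qed
  ultimately show "((\<lambda>t. integral {0..1} (\<lambda>s. s ^ n *\<^sub>R D (Suc n) (s * t))) has_vector_derivative
      integral {0..1} (\<lambda>s. s ^ Suc n *\<^sub>R D (Suc (Suc n)) (s * t))) (at t within ?J)"
    using leibniz_rule_vector_derivative[of ?J 0 1 "\<lambda>t s. s ^ n *\<^sub>R D (Suc n) (s * t)"
        "\<lambda>t s. s ^ Suc n *\<^sub>R D (Suc (Suc n)) (s * t)" t] comp_cont[of "Suc n" "Suc (Suc n)"] t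
    by (auto simp: cbox_interval)
qed

lemma hadamard_factorization:
  fixes D :: "nat \<Rightarrow> real \<Rightarrow> 'a::banach"
  assumes T: "deriv_tower {-a<..<a} D" and D00: "D 0 0 = 0" and t: "t \<in> {-a<..<a}"
  shows "D 0 t = t *\<^sub>R hadamard_quotient D 0 t"
proof -
  have "((\<lambda>s. D 0 (s * t)) has_vector_derivative t *\<^sub>R D 1 (s * t)) (at s within {0..1})"
    if "s \<in> {0..1}" for s
  proof -
    have "(D 0 has_vector_derivative D 1 (s * t)) (at (s * t))"
      using deriv_tower_at[OF T _ mult_mem_symmetric_interval[OF t that]] by simp
    hence "(D 0 has_vector_derivative D 1 (t * s)) (at (t * s))" by (simp add: mult.commute)
    from has_vector_derivative_at_within[OF has_vector_derivative_comp_scale[OF this]]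
    show ?thesis by (simp add: mult.commute)
  qed
  from fundamental_theorem_of_calculus[OF _ this]
  have "((\<lambda>s. t *\<^sub>R D 1 (s * t)) has_integral D 0 t) {0..1}" using D00 by simp
  hence "((\<lambda>s. D 1 (s * t)) has_integral D 0 t /\<^sub>R t) {0..1}" if "t \<noteq> 0"
    using has_integral_cmul[of "\<lambda>s. t *\<^sub>R D 1 (s * t)" "D 0 t" "{0..1}" "inverse t"] that by simp
  thus ?thesis
    by (cases "t = 0") (auto simp: hadamard_quotient_def D00 dest: integral_unique)
qed

lemma hadamard_quotient_0_0: "hadamard_quotient D 0 0 = D 1 0"
  by (simp add: hadamard_quotient_def)

lemma hadamard_quotient_1_0: "hadamard_quotient D 1 0 = (1/2) *\<^sub>R D 2 0"
proof -
  have "((\<lambda>s::real. s) has_integral 1/2) {0..1}"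
    using fundamental_theorem_of_calculus[of 0 1 "\<lambda>s. s\<^sup>2 / 2" "\<lambda>s. s"]
    by (force intro!: derivative_eq_intros simp: has_real_derivative_iff_has_vector_derivative[symmetric])
  from has_integral_scaleR_left[OF this, of "D 2 0"] show ?thesis
    by (simp add: hadamard_quotient_def integral_unique numeral_2_eq_2)
qed

lemma sqrt_mem_symmetric_interval:
  assumes "a > 0" "x \<in> {0..<a\<^sup>2}"
  shows "sqrt x \<in> {-a<..<a}"
proof -
  have "sqrt x < a" using assms real_sqrt_less_mono[of x "a\<^sup>2"] by simp
  moreover have "0 \<le> sqrt x" using assms by simp
  ultimately show ?thesis unfolding greaterThanLessThan_iff by linarith
qed

lemma deriv_tower_even_odd_derivative:
  fixes D :: "nat \<Rightarrow> real \<Rightarrow> 'a::real_normed_vector"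
  assumes T: "deriv_tower {-a<..<a} D" and ev: "\<forall>t\<in>{-a<..<a}. D 0 (-t) = D 0 t"
    and t: "t \<in> {-a<..<a}"
  shows "D 1 (-t) = - D 1 t"
proof -
  have "(D 0 has_vector_derivative D 1 ((-1) * t)) (at ((-1) * t))"
    using deriv_tower_at[OF T, of "-t"] t by simp
  from has_vector_derivative_comp_scale[OF this]
  have "((\<lambda>t. D 0 (-t)) has_vector_derivative - D 1 (-t)) (at t)" by simp
  hence "(D 0 has_vector_derivative - D 1 (-t)) (at t)"
    by (rule has_vector_derivative_transform_within_open[OF _ open_greaterThanLessThan t])
       (use ev in auto)
  from vector_derivative_unique_at[OF this deriv_tower_at[OF T _ t]] show ?thesis
    by (simp add: minus_equation_iff)
qed

lemma deriv_tower_even_derivative_0: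
  fixes D :: "nat \<Rightarrow> real \<Rightarrow> 'a::real_normed_vector"
  assumes "a > 0" "deriv_tower {-a<..<a} D" "\<forall>t\<in>{-a<..<a}. D 0 (-t) = D 0 t"
  shows "D 1 0 = 0"
  using deriv_tower_even_odd_derivative[OF assms(2,3), of 0] assms(1)
  by (simp add: eq_neg_iff_add_eq_0 flip: scaleR_2)

lemma has_vector_derivative_comp_sqrt:
  assumes "(g has_vector_derivative g') (at (sqrt x))" "x > 0"
  shows "((\<lambda>x. g (sqrt x)) has_vector_derivative (inverse (sqrt x) / 2) *\<^sub>R g') (at x)"
proof -
  have "(sqrt has_vector_derivative inverse (sqrt x) / 2) (at x)"
    using DERIV_real_sqrt[OF assms(2)] by (simp add: has_real_derivative_iff_has_vector_derivative)
  from vector_diff_chain_at[OF this assms(1)] show ?thesis by (simp add: o_def)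
qed

lemma has_vector_derivative_comp_sqrt_at_0:
  assumes expand: "\<forall>x\<in>{0..<b}. g (sqrt x) = g 0 + x *\<^sub>R K (sqrt x)" and K: "isCont K 0"
  shows "((\<lambda>x. g (sqrt x)) has_vector_derivative K 0) (at 0 within {0..<b})"
  unfolding has_vector_derivative_def has_derivative_at_within
proof (intro conjI)
  show "bounded_linear (\<lambda>h. h *\<^sub>R K 0)" by (rule bounded_linear_scaleR_left)
  have "isCont (\<lambda>y. K (sqrt y)) 0"
    using continuous_at_compose[OF isCont_real_sqrt[of 0], of K] K by (simp add: o_def)
  hence "((\<lambda>y. K (sqrt y) - K 0) \<longlongrightarrow> 0) (at 0 within {0..<b})"
    by (simp add: LIM_zero isCont_def tendsto_within_subset)
  moreover have "\<forall>\<^sub>F y in at 0 within {0..<b}. K (sqrt y) - K 0 =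
      (g (sqrt y) - g (sqrt 0) - (y - 0) *\<^sub>R K 0) /\<^sub>R norm (y - 0)"
    unfolding eventually_at_filter
    by (intro always_eventually allI impI) (use expand in \<open>auto simp: scaleR_diff_right\<close>)
  ultimately show "((\<lambda>y. (g (sqrt y) - g (sqrt 0) - (y - 0) *\<^sub>R K 0) /\<^sub>R norm (y - 0))
      \<longlongrightarrow> 0) (at 0 within {0..<b})"
    by (rule Lim_transform_eventually)
qed

lemma deriv_tower_even_expansion:
  fixes D :: "nat \<Rightarrow> real \<Rightarrow> 'a::banach"
  assumes a: "a > 0" and T: "deriv_tower {-a<..<a} D" and ev: "\<forall>t\<in>{-a<..<a}. D 0 (-t) = D 0 t"
  obtains K where "isCont K 0" "K 0 = (1/2) *\<^sub>R D 2 0"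
    "\<forall>t\<in>{-a<..<a}. D 0 t = D 0 0 + t\<^sup>2 *\<^sub>R K t"
proof -
  let ?J = "{-a<..<a}"
  have J0: "0 \<in> ?J" using a by simp
  define G where "G = (\<lambda>n. if n = 0 then (\<lambda>t. D 0 t - D 0 0) else D n)"
  have TG: "deriv_tower ?J G"
    using T unfolding deriv_tower_def G_def by (auto simp: has_vector_derivative_diff_const)
  define V where "V = hadamard_quotient G"
  have TV: "deriv_tower ?J V" unfolding V_def by (rule deriv_tower_hadamard_quotient[OF TG])
  have V00: "V 0 0 = 0"
    using deriv_tower_even_derivative_0[OF a T ev] hadamard_quotient_0_0[of G]
    by (simp add: V_def G_def)
  define K where "K = hadamard_quotient V 0"
  have "isCont K 0"
    using deriv_tower_at[OF deriv_tower_hadamard_quotient[OF TV] open_greaterThanLessThan J0]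
    by (auto simp: K_def intro: has_vector_derivative_continuous)
  moreover have "K 0 = (1/2) *\<^sub>R D 2 0"
    using hadamard_quotient_0_0[of V] hadamard_quotient_1_0[of G] by (simp add: K_def V_def G_def)
  moreover have "D 0 t = D 0 0 + t\<^sup>2 *\<^sub>R K t" if t: "t \<in> ?J" for t
    using hadamard_factorization[OF TG _ t] hadamard_factorization[OF TV V00 t]
    by (simp add: G_def V_def K_def power2_eq_square algebra_simps)
  ultimately show ?thesis using that by blast
qed

text \<open>The new even function is \<open>E\<^sub>0 t = D\<^sub>1 t / (2 t)\<close>.\<close>
lemma deriv_tower_even_sqrt_step:
  fixes D :: "nat \<Rightarrow> real \<Rightarrow> 'a::banach"
  assumes a: "a > 0" and T: "deriv_tower {-a<..<a} D" and ev: "\<forall>t\<in>{-a<..<a}. D 0 (-t) = D 0 t"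
  shows "\<exists>E. deriv_tower {-a<..<a} E \<and> (\<forall>t\<in>{-a<..<a}. E 0 (-t) = E 0 t) \<and>
     E 0 0 = (1/2) *\<^sub>R D 2 0 \<and>
     (\<forall>x\<in>{0..<a\<^sup>2}. ((\<lambda>x. D 0 (sqrt x)) has_vector_derivative E 0 (sqrt x)) (at x within {0..<a\<^sup>2}))"
proof -
  let ?J = "{-a<..<a}" and ?S = "{0..<a\<^sup>2}"
  have odd: "D 1 (-t) = - D 1 t" if "t \<in> ?J" for t
    using deriv_tower_even_odd_derivative[OF T ev that] .
  have T1: "deriv_tower ?J (\<lambda>n. D (Suc n))" by (rule deriv_tower_shift[OF T])
  define E where "E = (\<lambda>n t. (1/2::real) *\<^sub>R hadamard_quotient (\<lambda>n. D (Suc n)) n t)"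
  have TE: "deriv_tower ?J E"
    unfolding E_def by (rule deriv_tower_scaleR[OF deriv_tower_hadamard_quotient[OF T1]])
  have D1: "D 1 t = (2 * t) *\<^sub>R E 0 t" if "t \<in> ?J" for t
    using hadamard_factorization[OF T1 _ that] deriv_tower_even_derivative_0[OF a T ev]
    by (simp add: E_def)
  have evE: "E 0 (-t) = E 0 t" if t: "t \<in> ?J" for t
  proof (cases "t = 0")
    case False
    have "-t \<in> ?J" using t by auto
    hence "(2 * t) *\<^sub>R E 0 (-t) = (2 * t) *\<^sub>R E 0 t"
      using D1[of "-t"] D1[OF t] odd[OF t] by simp
    thus ?thesis using False by simp
  qed simp
  have E00: "E 0 0 = (1/2) *\<^sub>R D 2 0"
    using hadamard_quotient_0_0[of "\<lambda>n. D (Suc n)"] by (simp add: E_def numeral_2_eq_2)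
  have "((\<lambda>x. D 0 (sqrt x)) has_vector_derivative E 0 (sqrt x)) (at x within ?S)"
    if x: "x \<in> ?S" for x
  proof (cases "x = 0")
    case True
    obtain K where "isCont K 0" "K 0 = (1/2) *\<^sub>R D 2 0" "\<forall>t\<in>?J. D 0 t = D 0 0 + t\<^sup>2 *\<^sub>R K t"
      using deriv_tower_even_expansion[OF a T ev] .
    with has_vector_derivative_comp_sqrt_at_0[of "a\<^sup>2" "D 0" K] show ?thesis
      using sqrt_mem_symmetric_interval[OF a] True E00 by simp
  next
    case False
    with x have "x > 0" by simp
    have "(D 0 has_vector_derivative D 1 (sqrt x)) (at (sqrt x))"
      using deriv_tower_at[OF T _ sqrt_mem_symmetric_interval[OF a x]] by simp
    from has_vector_derivative_comp_sqrt[OF this \<open>x > 0\<close>]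
    show ?thesis using D1[OF sqrt_mem_symmetric_interval[OF a x]] \<open>x > 0\<close>
      by (auto intro: has_vector_derivative_at_within)
  qed
  thus ?thesis using TE evE E00 by blast
qed

lemma deriv_tower_even_comp_sqrt:
  fixes D :: "nat \<Rightarrow> real \<Rightarrow> 'a::banach"
  assumes a: "a > 0" and T: "deriv_tower {-a<..<a} D" and ev: "\<forall>t\<in>{-a<..<a}. D 0 (-t) = D 0 t"
  obtains F where "deriv_tower {0..<a\<^sup>2} F" "\<forall>x\<in>{0..<a\<^sup>2}. F 0 x = D 0 (sqrt x)"
    "F 1 0 = (1/2) *\<^sub>R D 2 0"
proof -
  let ?J = "{-a<..<a}" and ?S = "{0..<a\<^sup>2}"
  define P where "P = (\<lambda>D :: nat \<Rightarrow> real \<Rightarrow> 'a. deriv_tower ?J D \<and> (\<forall>t\<in>?J. D 0 (-t) = D 0 t))"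
  define Q where "Q = (\<lambda>(D :: nat \<Rightarrow> real \<Rightarrow> 'a) E. P E \<and> E 0 0 = (1/2) *\<^sub>R D 2 0 \<and>
     (\<forall>x\<in>?S. ((\<lambda>x. D 0 (sqrt x)) has_vector_derivative E 0 (sqrt x)) (at x within ?S)))"
  define step where "step = (\<lambda>D. SOME E. Q D E)"
  have step: "Q D (step D)" if "P D" for D
    unfolding step_def
    by (rule someI_ex[of "Q D"]) (use deriv_tower_even_sqrt_step[OF a] that in \<open>auto simp: P_def Q_def\<close>)
  define Dn where "Dn = (\<lambda>n. (step ^^ n) D)"
  have P: "P (Dn n)" for n
    by (induction n) (use T ev step in \<open>auto simp: P_def Q_def Dn_def\<close>)
  define F where "F = (\<lambda>n x. Dn n 0 (sqrt x))"
  have "Dn (Suc n) = step (Dn n)" for n by (simp add: Dn_def)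
  hence "deriv_tower ?S F"
    using step[OF P] unfolding deriv_tower_def F_def Q_def by simp
  moreover have "F 1 0 = (1/2) *\<^sub>R D 2 0"
    using step[OF P[of 0]] by (simp add: F_def Dn_def Q_def)
  moreover have "\<forall>x\<in>?S. F 0 x = D 0 (sqrt x)" by (simp add: F_def Dn_def)
  ultimately show ?thesis using that by blast
qed

section \<open>Immersions\<close>

definition smooth_immersion :: "real set \<Rightarrow> (real \<Rightarrow> 'a::real_normed_vector) \<Rightarrow> bool" where
  "smooth_immersion I g \<longleftrightarrow> (\<exists>D. deriv_tower I D \<and> (\<forall>x\<in>I. D 0 x = g x) \<and> (\<forall>x\<in>I. D 1 x \<noteq> 0))"

lemma smooth_immersion_cong:
  "smooth_immersion I g \<Longrightarrow> (\<And>x. x \<in> I \<Longrightarrow> g x = h x) \<Longrightarrow> smooth_immersion I h"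
  unfolding smooth_immersion_def by auto

lemma smooth_immersion_continuous_on: "smooth_immersion I g \<Longrightarrow> continuous_on I g"
  unfolding smooth_immersion_def using deriv_tower_continuous_on continuous_on_cong by metis

lemma smooth_immersion_subset: "smooth_immersion I g \<Longrightarrow> J \<subseteq> I \<Longrightarrow> smooth_immersion J g"
  unfolding smooth_immersion_def by (meson deriv_tower_subset subsetD)

lemma smooth_immersion_affine:
  assumes "smooth_immersion K g" "\<delta> \<noteq> 0" "\<forall>t\<in>I. x0 + \<delta> * t \<in> K"
  shows "smooth_immersion I (\<lambda>t. g (x0 + \<delta> * t))"
proof -
  obtain D where "deriv_tower K D" "\<forall>x\<in>K. D 0 x = g x" "\<forall>x\<in>K. D 1 x \<noteq> 0"
    using assms(1) unfolding smooth_immersion_def by blast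
  with deriv_tower_affine[of K D I x0 \<delta>] assms(2,3) show ?thesis
    unfolding smooth_immersion_def by (intro exI[of _ "\<lambda>n t. (\<delta> ^ n) *\<^sub>R D n (x0 + \<delta> * t)"]) auto
qed

lemma smooth_immersion_iff:
  assumes nontrivial: "\<forall>x\<in>I. at x within I \<noteq> bot"
  shows "smooth_immersion I g \<longleftrightarrow> smooth_on I g \<and> (\<forall>x\<in>I. vector_derivative g (at x within I) \<noteq> 0)"
proof -
  have vd: "vector_derivative g (at x within I) = D 1 x"
    if "deriv_tower I D" "\<forall>x\<in>I. D 0 x = g x" "x \<in> I" for D x
    using vector_derivative_within[OF _ deriv_tower_first_derivative[OF that]] nontrivial that(3)
    by blast
  show ?thesis
  proof
    assume "smooth_immersion I g"
    then obtain D where "deriv_tower I D" "\<forall>x\<in>I. D 0 x = g x" "\<forall>x\<in>I. D 1 x \<noteq> 0"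
      unfolding smooth_immersion_def by blast
    with vd show "smooth_on I g \<and> (\<forall>x\<in>I. vector_derivative g (at x within I) \<noteq> 0)"
      unfolding smooth_on_iff_deriv_tower by auto
  next
    assume *: "smooth_on I g \<and> (\<forall>x\<in>I. vector_derivative g (at x within I) \<noteq> 0)"
    then obtain D where "deriv_tower I D" "\<forall>x\<in>I. D 0 x = g x"
      unfolding smooth_on_iff_deriv_tower by blast
    with vd * show "smooth_immersion I g" unfolding smooth_immersion_def by auto
  qed
qed

lemma smooth_embedding_iff_immersion:
  assumes "\<forall>x\<in>I. at x within I \<noteq> bot"
  shows "smooth_embedding I g \<longleftrightarrow> smooth_immersion I g \<and> (\<exists>h. homeomorphism I (g ` I) g h)"
proof -
  have "inj_on g I" if "homeomorphism I (g ` I) g h" for h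
    using that unfolding homeomorphism_def by (metis inj_on_inverseI)
  thus ?thesis unfolding smooth_embedding_def smooth_immersion_iff[OF assms] by blast
qed

lemma at_within_Ico_neq_bot: "x \<in> {l..<u} \<Longrightarrow> at x within {l..<u::real} \<noteq> bot"
  using trivial_limit_within[of x "{l..<u}"] islimpt_Ico[of l u x] by auto

lemma at_within_Ioo_neq_bot: "x \<in> {l<..<u} \<Longrightarrow> at x within {l<..<u::real} \<noteq> bot"
  using at_within_open[OF _ open_greaterThanLessThan, of x l u] by simp

section \<open>Curves on \<open>M1\<close>\<close>

lemma smooth_immersion_pairE:
  assumes "smooth_immersion J (\<lambda>t. (z t, w t))"
  obtains Z W where "deriv_tower J Z" "deriv_tower J W" "\<forall>t\<in>J. Z 0 t = z t" "\<forall>t\<in>J. W 0 t = w t"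
    "\<forall>t\<in>J. Z 1 t \<noteq> 0 \<or> W 1 t \<noteq> 0"
proof -
  obtain D where TD: "deriv_tower J D" and D0: "\<forall>t\<in>J. D 0 t = (z t, w t)"
    and D1: "\<forall>t\<in>J. D 1 t \<noteq> 0"
    using assms unfolding smooth_immersion_def by blast
  show ?thesis
  proof
    show "deriv_tower J (\<lambda>n t. fst (D n t))" "deriv_tower J (\<lambda>n t. snd (D n t))"
      using deriv_tower_fst[OF TD] deriv_tower_snd[OF TD] .
    show "\<forall>t\<in>J. fst (D 0 t) = z t" "\<forall>t\<in>J. snd (D 0 t) = w t" using D0 by simp_all
    show "\<forall>t\<in>J. fst (D 1 t) \<noteq> 0 \<or> snd (D 1 t) \<noteq> 0"
      using D1 by (metis prod.collapse zero_prod_def)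
  qed
qed

lemma M1_derivative_identity:
  fixes z w :: "real \<Rightarrow> complex"
  assumes J: "open J" "t \<in> J" and eq: "\<forall>s\<in>J. z s ^ 2 = poly f (w s)"
    and dz: "(z has_vector_derivative z') (at t)" and dw: "(w has_vector_derivative w') (at t)"
  shows "2 * z t * z' = w' * poly (pderiv f) (w t)"
proof -
  have "((poly f \<circ> w) has_vector_derivative w' * poly (pderiv f) (w t)) (at t)"
    by (rule field_vector_diff_chain_at[OF dw poly_DERIV])
  hence "((\<lambda>s. z s * z s) has_vector_derivative w' * poly (pderiv f) (w t)) (at t)"
    by (rule has_vector_derivative_transform_within_open[OF _ J])
       (use eq in \<open>auto simp: power2_eq_square\<close>)
  from vector_derivative_unique_at[OF has_vector_derivative_mult[OF dz dz] this]
  show ?thesis by (simp add: algebra_simps)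
qed

lemma M1_w_derivative_nonzero:
  fixes z w :: "real \<Rightarrow> complex"
  assumes J: "open J" "t \<in> J" and eq: "\<forall>s\<in>J. z s ^ 2 = poly f (w s)"
    and dz: "(z has_vector_derivative z') (at t)" and dw: "(w has_vector_derivative w') (at t)"
    and "z t \<noteq> 0" and "z' \<noteq> 0 \<or> w' \<noteq> 0"
  shows "w' \<noteq> 0"
  using M1_derivative_identity[OF J eq dz dw] assms(6,7) by auto

lemma smooth_immersion_snd_of_M1:
  fixes z w :: "real \<Rightarrow> complex"
  assumes J: "open J" and imm: "smooth_immersion J (\<lambda>t. (z t, w t))"
    and eq: "\<forall>t\<in>J. z t ^ 2 = poly f (w t)" and z_nonzero: "\<forall>t\<in>J. z t \<noteq> 0"
  shows "smooth_immersion J w"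
proof -
  obtain Z W where TZ: "deriv_tower J Z" and TW: "deriv_tower J W" and Z0: "\<forall>t\<in>J. Z 0 t = z t"
    and W0: "\<forall>t\<in>J. W 0 t = w t" and regular: "\<forall>t\<in>J. Z 1 t \<noteq> 0 \<or> W 1 t \<noteq> 0"
    using smooth_immersion_pairE[OF imm] .
  have "W 1 t \<noteq> 0" if t: "t \<in> J" for t
  proof (rule M1_w_derivative_nonzero[OF J t eq])
    show "(z has_vector_derivative Z 1 t) (at t)" "(w has_vector_derivative W 1 t) (at t)"
      using deriv_tower_at[OF TZ J t, of 0] deriv_tower_at[OF TW J t, of 0] Z0 W0 J t
      by (auto elim!: has_vector_derivative_transform_within_open)
  qed (use z_nonzero regular t in auto)
  thus ?thesis using TW W0 unfolding smooth_immersion_def by blast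
qed

lemma M1_second_derivative_identity:
  fixes Z W :: "nat \<Rightarrow> real \<Rightarrow> complex"
  assumes J: "open J" "t \<in> J" and TZ: "deriv_tower J Z" and TW: "deriv_tower J W"
    and eq: "\<forall>s\<in>J. Z 0 s ^ 2 = poly f (W 0 s)" and Z0: "Z 0 t = 0" and W1: "W 1 t = 0"
  shows "2 * Z 1 t * Z 1 t = W 2 t * poly (pderiv f) (W 0 t)"
proof -
  have dZ: "(Z n has_vector_derivative Z (Suc n) t) (at t)"
    and dW: "(W n has_vector_derivative W (Suc n) t) (at t)" for n
    using deriv_tower_at[OF TZ J] deriv_tower_at[OF TW J] by auto
  have first: "2 * Z 0 s * Z 1 s = W 1 s * poly (pderiv f) (W 0 s)" if "s \<in> J" for s
    using M1_derivative_identity[OF J(1) that eq] deriv_tower_at[OF TZ J(1) that]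
      deriv_tower_at[OF TW J(1) that] by simp
  have "((\<lambda>s. 2 * Z 0 s) has_vector_derivative 2 * Z 1 t) (at t)"
    using has_vector_derivative_mult[OF has_vector_derivative_const[of 2] dZ[of 0]] by simp
  from has_vector_derivative_mult[OF this dZ[of 1]]
  have "((\<lambda>s. 2 * Z 0 s * Z 1 s) has_vector_derivative 2 * Z 1 t * Z 1 t) (at t)"
    using Z0 by (simp add: numeral_2_eq_2)
  moreover have "((\<lambda>s. W 1 s * poly (pderiv f) (W 0 s)) has_vector_derivative
      W 2 t * poly (pderiv f) (W 0 t)) (at t)"
    using has_vector_derivative_mult[OF dW[of 1] field_vector_diff_chain_at[OF dW[of 0] poly_DERIV]] W1
    by (simp add: o_def numeral_2_eq_2)
  hence "((\<lambda>s. 2 * Z 0 s * Z 1 s) has_vector_derivative W 2 t * poly (pderiv f) (W 0 t)) (at t)"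
    by (rule has_vector_derivative_transform_within_open[OF _ J]) (use first in auto)
  ultimately show ?thesis by (rule vector_derivative_unique_at)
qed

lemma deriv_tower_comp_sqrt_derivative:
  assumes a: "a > 0" and TW: "deriv_tower {-a<..<a} W" and TF: "deriv_tower {0..<a\<^sup>2} F"
    and F0: "\<forall>x\<in>{0..<a\<^sup>2}. F 0 x = W 0 (sqrt x)" and x: "x \<in> {0..<a\<^sup>2}" "x > 0"
  shows "F 1 x = (inverse (sqrt x) / 2) *\<^sub>R W 1 (sqrt x)"
proof -
  have tJ: "sqrt x \<in> {-a<..<a}" by (rule sqrt_mem_symmetric_interval[OF a x(1)])
  have "(W 0 has_vector_derivative W 1 (sqrt x)) (at (sqrt x))" using deriv_tower_at[OF TW _ tJ] by simp
  from has_vector_derivative_at_within[OF has_vector_derivative_comp_sqrt[OF this x(2)]]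
  have "(F 0 has_vector_derivative (inverse (sqrt x) / 2) *\<^sub>R W 1 (sqrt x)) (at x within {0..<a\<^sup>2})"
    by (rule has_vector_derivative_transform[OF x(1), rotated]) (use F0 in auto)
  with deriv_tower_first_derivative[OF TF _ x(1)] show ?thesis
    using vector_derivative_unique_within[OF at_within_Ico_neq_bot[OF x(1)]] by blast
qed

lemma smooth_immersion_fold_sqrt:
  fixes z w :: "real \<Rightarrow> complex"
  assumes a: "a > 0" and imm: "smooth_immersion {-a<..<a} (\<lambda>t. (z t, w t))"
    and M: "\<forall>t\<in>{-a<..<a}. z t ^ 2 = poly f (w t)"
    and z0: "z 0 = 0" and z_nonzero: "\<forall>t\<in>{-a<..<a}. t \<noteq> 0 \<longrightarrow> z t \<noteq> 0"
    and ev: "\<forall>t\<in>{-a<..<a}. w (-t) = w t"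
  shows "smooth_immersion {0..<a\<^sup>2} (\<lambda>x. w (sqrt x))"
proof -
  let ?J = "{-a<..<a}" and ?S = "{0..<a\<^sup>2}"
  have J0: "0 \<in> ?J" using a by simp
  obtain Z W where TZ: "deriv_tower ?J Z" and TW: "deriv_tower ?J W" and Z0: "\<forall>t\<in>?J. Z 0 t = z t"
    and W0: "\<forall>t\<in>?J. W 0 t = w t" and regular: "\<forall>t\<in>?J. Z 1 t \<noteq> 0 \<or> W 1 t \<noteq> 0"
    using smooth_immersion_pairE[OF imm] .
  have eq: "\<forall>s\<in>?J. Z 0 s ^ 2 = poly f (W 0 s)" using M Z0 W0 by simp
  have W_even: "\<forall>t\<in>?J. W 0 (-t) = W 0 t"
    using W0 ev by (metis add.inverse_inverse greaterThanLessThan_iff neg_less_iff_less)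
  obtain F where TF: "deriv_tower ?S F" and F0: "\<forall>x\<in>?S. F 0 x = W 0 (sqrt x)"
    and F10: "F 1 0 = (1/2) *\<^sub>R W 2 0"
    using deriv_tower_even_comp_sqrt[OF a TW W_even] .
  have "F 1 x \<noteq> 0" if x: "x \<in> ?S" for x
  proof (cases "x = 0")
    case True
    have W10: "W 1 0 = 0" by (rule deriv_tower_even_derivative_0[OF a TW W_even])
    hence "Z 1 0 \<noteq> 0" using regular J0 by auto
    with M1_second_derivative_identity[OF open_greaterThanLessThan J0 TZ TW eq _ W10] Z0 z0 J0
    have "W 2 0 \<noteq> 0" by auto
    thus ?thesis using True F10 by simp
  next
    case False
    hence x0: "x > 0" using x by simp
    have tJ: "sqrt x \<in> ?J" by (rule sqrt_mem_symmetric_interval[OF a x])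
    have "Z 0 (sqrt x) \<noteq> 0" using z_nonzero Z0 tJ x0 by simp
    with M1_w_derivative_nonzero[OF open_greaterThanLessThan tJ eq deriv_tower_at[OF TZ _ tJ]
        deriv_tower_at[OF TW _ tJ]] regular tJ
    have "W 1 (sqrt x) \<noteq> 0" by simp
    thus ?thesis using deriv_tower_comp_sqrt_derivative[OF a TW TF F0 x x0] x0 by simp
  qed
  hence "smooth_immersion ?S (\<lambda>x. W 0 (sqrt x))" unfolding smooth_immersion_def using TF F0 by blast
  thus ?thesis
    by (rule smooth_immersion_cong) (use W0 sqrt_mem_symmetric_interval[OF a] in simp)
qed

section \<open>Folding the curve onto its \<open>w\<close>-projection\<close>

lemma min_norm_diff_add_sq_le:
  fixes u v :: "'a::real_normed_field"
  shows "(min (norm (u - v)) (norm (u + v)))\<^sup>2 \<le> norm (u\<^sup>2 - v\<^sup>2)"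
proof -
  have "(min (norm (u - v)) (norm (u + v)))\<^sup>2 \<le> norm (u - v) * norm (u + v)"
    unfolding power2_eq_square by (rule mult_mono) auto
  also have "\<dots> = norm (u\<^sup>2 - v\<^sup>2)"
    by (simp add: norm_mult[symmetric] power2_eq_square algebra_simps)
  finally show ?thesis .
qed

text \<open>The fold \<open>(z, w) \<mapsto> w\<close> identifies \<open>(z, w)\<close> with \<open>(-z, w)\<close>: if \<open>w (s\<^sub>n) \<rightarrow> w s\<close>, then
  \<open>z (s\<^sub>n)\<^sup>2 \<rightarrow> z s\<^sup>2\<close>, so after flipping the sign of \<open>s\<^sub>n\<close> where needed \<open>z (\<plusminus>s\<^sub>n) \<rightarrow> z s\<close>, and
  the curve being an embedding gives \<open>\<plusminus>s\<^sub>n \<rightarrow> s\<close>.\<close>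
lemma fold_tendsto:
  fixes z w :: "real \<Rightarrow> complex"
  assumes hom: "homeomorphism J ((\<lambda>x. (z x, w x)) ` J) (\<lambda>x. (z x, w x)) h"
    and eq: "\<forall>x\<in>J. z x ^ 2 = poly f (w x)"
    and sym: "\<forall>x\<in>J. - x \<in> J \<and> z (- x) = - z x \<and> w (- x) = w x"
    and s: "\<forall>n. s n \<in> J \<and> 0 \<le> s n" and s0: "s0 \<in> J" "0 \<le> s0"
    and lim: "(\<lambda>n. w (s n)) \<longlonglongrightarrow> w s0"
  shows "s \<longlonglongrightarrow> s0"
proof -
  let ?\<alpha> = "\<lambda>x. (z x, w x)"
  define t where "t = (\<lambda>n. if norm (z (s n) - z s0) \<le> norm (z (s n) + z s0) then s n else - s n)"
  have sn: "s n \<in> J" "0 \<le> s n" for n using s by auto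
  have neg: "- s n \<in> J" "z (- s n) = - z (s n)" "w (- s n) = w (s n)" for n
    using sym sn[of n] by blast+
  have tJ: "t n \<in> J" for n using neg(1) sn(1) by (simp add: t_def)
  have wt: "w (t n) = w (s n)" for n using neg(3) by (simp add: t_def)
  have abs_t: "\<bar>t n\<bar> = s n" for n using sn(2) by (simp add: t_def)
  have norm_neg: "norm (- a - b) = norm (a + b)" for a b :: complex
    using norm_minus_cancel[of "a + b"] by (simp only: minus_add_distrib diff_conv_add_uminus)
  have "norm (z (t n) - z s0) = min (norm (z (s n) - z s0)) (norm (z (s n) + z s0))" for n
  proof (cases "norm (z (s n) - z s0) \<le> norm (z (s n) + z s0)")
    case True
    thus ?thesis by (simp add: t_def)
  next
    case False
    thus ?thesis using neg(2)[of n] norm_neg[of "z (s n)" "z s0"] by (simp add: t_def)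
  qed
  hence "(norm (z (t n) - z s0))\<^sup>2 \<le> norm (poly f (w (s n)) - poly f (w s0))" for n
    using min_norm_diff_add_sq_le[of "z (s n)" "z s0"] eq sn[of n] s0 by simp
  hence bound: "norm (z (t n) - z s0) \<le> sqrt (norm (poly f (w (s n)) - poly f (w s0)))" for n
    by (simp add: real_le_rsqrt)
  have "(\<lambda>n. sqrt (norm (poly f (w (s n)) - poly f (w s0)))) \<longlonglongrightarrow> 0"
    using tendsto_real_sqrt[OF tendsto_norm_zero[OF LIM_zero[OF tendsto_poly[OF lim]]]] by simp
  hence "(\<lambda>n. z (t n) - z s0) \<longlonglongrightarrow> 0"
    by (rule Lim_null_comparison[rotated]) (use bound in auto)
  hence "(\<lambda>n. ?\<alpha> (t n)) \<longlonglongrightarrow> ?\<alpha> s0"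
    using tendsto_Pair[OF _ lim] by (simp add: wt LIM_zero_iff)
  hence "(\<lambda>n. h (?\<alpha> (t n))) \<longlonglongrightarrow> h (?\<alpha> s0)"
    by (rule continuous_on_tendsto_compose[OF homeomorphism_cont2[OF hom]]) (use s0 tJ in auto)
  hence "t \<longlonglongrightarrow> s0" using homeomorphism_apply1[OF hom] tJ s0 by simp
  from tendsto_rabs[OF this] show ?thesis using abs_t s0 by simp
qed

lemma fold_sqrt_homeomorphism:
  fixes z w :: "real \<Rightarrow> complex"
  assumes e: "\<epsilon> > 0"
    and hom: "homeomorphism {-\<epsilon><..<\<epsilon>} ((\<lambda>x. (z x, w x)) ` {-\<epsilon><..<\<epsilon>}) (\<lambda>x. (z x, w x)) h"
    and eq: "\<forall>x\<in>{-\<epsilon><..<\<epsilon>}. z x ^ 2 = poly f (w x)"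
    and sym: "\<forall>x\<in>{-\<epsilon><..<\<epsilon>}. z (- x) = - z x \<and> w (- x) = w x"
    and cont: "continuous_on {0..<\<epsilon>\<^sup>2} (\<lambda>x. w (sqrt x))"
    and inj: "inj_on (\<lambda>x. w (sqrt x)) {0..<\<epsilon>\<^sup>2}"
  shows "\<exists>g. homeomorphism {0..<\<epsilon>\<^sup>2} ((\<lambda>x. w (sqrt x)) ` {0..<\<epsilon>\<^sup>2}) (\<lambda>x. w (sqrt x)) g"
proof -
  let ?S = "{0..<\<epsilon>\<^sup>2}" and ?\<eta> = "\<lambda>x. w (sqrt x)"
  define g where "g = inv_into ?S ?\<eta>"
  have gS: "g y \<in> ?S" and \<eta>g: "?\<eta> (g y) = y" if "y \<in> ?\<eta> ` ?S" for y
    using that unfolding g_def by (blast intro: inv_into_into, rule f_inv_into_f)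
  have "continuous_on (?\<eta> ` ?S) g"
  proof (rule continuous_on_sequentiallyI)
    fix u a assume u: "\<forall>n. u n \<in> ?\<eta> ` ?S" and a: "a \<in> ?\<eta> ` ?S" and ua: "u \<longlonglongrightarrow> a"
    have "(\<lambda>n. sqrt (g (u n))) \<longlonglongrightarrow> sqrt (g a)"
    proof (rule fold_tendsto[OF hom eq])
      show "\<forall>x\<in>{-\<epsilon><..<\<epsilon>}. - x \<in> {-\<epsilon><..<\<epsilon>} \<and> z (- x) = - z x \<and> w (- x) = w x"
        using sym by auto
      show "\<forall>n. sqrt (g (u n)) \<in> {-\<epsilon><..<\<epsilon>} \<and> 0 \<le> sqrt (g (u n))"
        using gS u sqrt_mem_symmetric_interval[OF e] by auto
      show "sqrt (g a) \<in> {-\<epsilon><..<\<epsilon>}" "0 \<le> sqrt (g a)"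
        using gS a sqrt_mem_symmetric_interval[OF e] by auto
      show "(\<lambda>n. w (sqrt (g (u n)))) \<longlonglongrightarrow> w (sqrt (g a))"
        using ua \<eta>g u a by simp
    qed
    from tendsto_power[OF this, of 2] show "(\<lambda>n. g (u n)) \<longlonglongrightarrow> g a"
      using gS u a by simp
  qed
  moreover have "g (?\<eta> x) = x" if "x \<in> ?S" for x
    using inv_into_f_f[OF inj that] by (simp add: g_def)
  ultimately have "homeomorphism ?S (?\<eta> ` ?S) ?\<eta> g"
    using cont gS \<eta>g by (intro homeomorphismI) auto
  thus ?thesis by blast
qed

section \<open>Charts\<close>

definition has_chart :: "'a::real_normed_vector set \<Rightarrow> real set \<Rightarrow> 'a \<Rightarrow> bool" where
  "has_chart c I p \<longleftrightarrow> (\<exists>U \<phi>. open U \<and> p \<in> U \<and> \<phi> 0 = p \<and> smooth_embedding I \<phi> \<and> \<phi> ` I = c \<inter> U)"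

lemma regular_curve_with_boundary_iff_charts:
  "regular_curve_with_boundary c B \<longleftrightarrow>
     B \<subseteq> c \<and> (\<forall>p\<in>c. has_chart c (if p \<in> B then {0..<1} else {-1<..<1}) p)"
  unfolding regular_curve_with_boundary_def has_chart_def Let_def ..

lemma has_chart_of_homeomorphism:
  assumes hom: "homeomorphism K c \<sigma> \<sigma>'" and img: "\<psi> ` I = K \<inter> V" and V: "open V"
    and hom_\<psi>: "homeomorphism I (\<psi> ` I) \<psi> \<psi>'" and I0: "0 \<in> I"
    and nontrivial: "\<forall>t\<in>I. at t within I \<noteq> bot" and imm: "smooth_immersion I (\<lambda>t. \<sigma> (\<psi> t))"
  shows "has_chart c I (\<sigma> (\<psi> 0))"
proof -
  have sub: "\<psi> ` I \<subseteq> K" using img by blast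
  have "homeomorphism (\<psi> ` I) (\<sigma> ` \<psi> ` I) \<sigma> \<sigma>'"
    by (rule homeomorphism_of_subsets[OF hom sub])
       (use hom sub in \<open>auto simp: homeomorphism_def\<close>)
  from homeomorphism_compose[OF hom_\<psi> this]
  have "homeomorphism I ((\<lambda>t. \<sigma> (\<psi> t)) ` I) (\<lambda>t. \<sigma> (\<psi> t)) (\<psi>' \<circ> \<sigma>')"
    by (simp add: image_comp o_def)
  hence emb: "smooth_embedding I (\<lambda>t. \<sigma> (\<psi> t))"
    using imm smooth_embedding_iff_immersion[OF nontrivial] by blast
  have "openin (top_of_set K) (\<psi> ` I)" unfolding openin_open using img V by blast
  from homeomorphism_imp_open_map[OF hom this]
  obtain U where U: "open U" "\<sigma> ` \<psi> ` I = c \<inter> U" unfolding openin_open by blast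
  show ?thesis
    unfolding has_chart_def using U emb I0
    by (intro exI[of _ U] exI[of _ "\<lambda>t. \<sigma> (\<psi> t)"]) (auto simp: image_comp o_def)
qed

lemma affine_homeomorphism:
  "\<delta> \<noteq> 0 \<Longrightarrow> homeomorphism I ((\<lambda>t. x0 + \<delta> * t) ` I) (\<lambda>t. x0 + \<delta> * (t::real)) (\<lambda>y. (y - x0) / \<delta>)"
  by (rule homeomorphismI) (auto intro!: continuous_intros)

lemma image_affine_greaterThanLessThan:
  assumes "\<delta> > 0"
  shows "(\<lambda>t. x0 + \<delta> * t) ` {-1<..<1} = {x0 - \<delta><..<x0 + (\<delta>::real)}"
proof -
  have "y \<in> (\<lambda>t. x0 + \<delta> * t) ` {-1<..<1}" if "y \<in> {x0 - \<delta><..<x0 + \<delta>}" for y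
    using assms that by (intro image_eqI[of _ _ "(y - x0) / \<delta>"]) (auto simp: field_simps)
  moreover have "x0 + \<delta> * t \<in> {x0 - \<delta><..<x0 + \<delta>}" if "t \<in> {-1<..<1}" for t
    using assms that mult_strict_left_mono[of t 1 \<delta>] mult_strict_left_mono[of "-1" t \<delta>] by auto
  ultimately show ?thesis by blast
qed

lemma has_chart_interior:
  assumes hom: "homeomorphism K c \<sigma> \<sigma>'" and \<delta>: "\<delta> > 0" and sub: "{u - \<delta><..<u + \<delta>} \<subseteq> K"
    and imm: "smooth_immersion {u - \<delta><..<u + \<delta>} \<sigma>"
  shows "has_chart c {-1<..<1} (\<sigma> u)"
proof -
  have img: "(\<lambda>t. u + \<delta> * t) ` {-1<..<1} = K \<inter> {u - \<delta><..<u + \<delta>}"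
    using image_affine_greaterThanLessThan[OF \<delta>] sub by blast
  have "smooth_immersion {-1<..<1} (\<lambda>t. \<sigma> (u + \<delta> * t))"
    by (rule smooth_immersion_affine[OF imm])
       (use \<delta> in simp, use image_affine_greaterThanLessThan[OF \<delta>, of u] in blast)
  from has_chart_of_homeomorphism[OF hom img _ affine_homeomorphism _ _ this] \<delta>
  show ?thesis using at_within_Ioo_neq_bot by simp
qed

lemma image_sqrt_scale_atLeastLessThan:
  assumes "r > 0"
  shows "(\<lambda>t. sqrt (r\<^sup>2 * t)) ` {0..<1} = {0..<r}"
proof -
  have "y \<in> (\<lambda>t. sqrt (r\<^sup>2 * t)) ` {0..<1}" if "y \<in> {0..<r}" for y
  proof (rule image_eqI[of _ _ "y\<^sup>2 / r\<^sup>2"])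
    show "y\<^sup>2 / r\<^sup>2 \<in> {0..<1}" using assms that power_strict_mono[of y r 2] by auto
  qed (use assms that in simp)
  moreover have "sqrt (r\<^sup>2 * t) \<in> {0..<r}" if "t \<in> {0..<1}" for t
  proof -
    have "r\<^sup>2 * t < r\<^sup>2" using assms that by simp
    hence "sqrt (r\<^sup>2 * t) < sqrt (r\<^sup>2)" by (simp only: real_sqrt_less_iff)
    thus ?thesis using assms that by simp
  qed
  ultimately show ?thesis by blast
qed

lemma has_chart_end:
  assumes hom: "homeomorphism K c \<sigma> \<sigma>'" and r: "r > 0" and e: "e \<noteq> 0"
    and img: "(\<lambda>y. x0 + e * y) ` {0..<r} = K \<inter> V" and V: "open V"
    and imm: "smooth_immersion {0..<r\<^sup>2} (\<lambda>x. \<sigma> (x0 + e * sqrt x))"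
  shows "has_chart c {0..<1} (\<sigma> x0)"
proof -
  let ?\<psi> = "\<lambda>t. x0 + e * sqrt (r\<^sup>2 * t)"
  have "?\<psi> ` {0..<1} = (\<lambda>y. x0 + e * y) ` (\<lambda>t. sqrt (r\<^sup>2 * t)) ` {0..<1}"
    by (simp add: image_image)
  hence img_\<psi>: "?\<psi> ` {0..<1} = (\<lambda>y. x0 + e * y) ` {0..<r}"
    by (simp only: image_sqrt_scale_atLeastLessThan[OF r])
  have hom_\<psi>: "homeomorphism {0..<1} (?\<psi> ` {0..<1}) ?\<psi> (\<lambda>y. ((y - x0) / e)\<^sup>2 / r\<^sup>2)"
  proof (rule homeomorphismI)
    show "?\<psi> (((y - x0) / e)\<^sup>2 / r\<^sup>2) = y" if "y \<in> ?\<psi> ` {0..<1}" for y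
      using that r e by (auto simp: img_\<psi> abs_mult)
  qed (use r e in \<open>auto intro!: continuous_intros\<close>)
  have imm_\<psi>: "smooth_immersion {0..<1} (\<lambda>t. \<sigma> (?\<psi> t))"
    using smooth_immersion_affine[OF imm, of "r\<^sup>2" "{0..<1}" 0] r
    by (simp add: mult_le_cancel_left1 mult_less_cancel_left1)
  have "has_chart c {0..<1} (\<sigma> (?\<psi> 0))"
    by (rule has_chart_of_homeomorphism[OF hom _ V hom_\<psi> _ _ imm_\<psi>])
       (use img img_\<psi> at_within_Ico_neq_bot in auto)
  thus ?thesis by simp
qed

lemma regular_curve_half_open_arc:
  assumes b: "b > 0" and hom: "homeomorphism {0..<b} c \<eta> g" and imm: "smooth_immersion {0..<b} \<eta>"
  shows "regular_curve_with_boundary c {\<eta> 0}"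
  unfolding regular_curve_with_boundary_iff_charts
proof (intro conjI ballI)
  show "{\<eta> 0} \<subseteq> c" using homeomorphism_image1[OF hom] b by auto
  fix p assume "p \<in> c"
  then obtain x0 where x0: "x0 \<in> {0..<b}" "p = \<eta> x0"
    using homeomorphism_image1[OF hom] by blast
  have inj: "inj_on \<eta> {0..<b}" using hom unfolding homeomorphism_def by (metis inj_on_inverseI)
  show "has_chart c (if p \<in> {\<eta> 0} then {0..<1} else {-1<..<1}) p"
  proof (cases "x0 = 0")
    case True
    have img: "(\<lambda>t. 0 + b * t) ` {0..<1} = {0..<b} \<inter> UNIV"
    proof -
      have "y \<in> (\<lambda>t. 0 + b * t) ` {0..<1}" if "y \<in> {0..<b}" for y
        using b that by (intro image_eqI[of _ _ "y / b"]) auto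
      thus ?thesis using b by (auto simp: mult_less_cancel_left1)
    qed
    have "smooth_immersion {0..<1} (\<lambda>t. \<eta> (0 + b * t))"
      by (rule smooth_immersion_affine[OF imm]) (use img b in auto)
    from has_chart_of_homeomorphism[OF hom img open_UNIV affine_homeomorphism _ _ this]
    show ?thesis using True x0 b at_within_Ico_neq_bot by simp
  next
    case False
    define \<delta> where "\<delta> = min x0 (b - x0)"
    have "\<delta> > 0" and sub: "{x0 - \<delta><..<x0 + \<delta>} \<subseteq> {0..<b}"
      using False x0 by (auto simp: \<delta>_def)
    from has_chart_interior[OF hom this(1) sub smooth_immersion_subset[OF imm sub]]
    show ?thesis using x0 False inj_onD[OF inj, of x0 0] b by auto
  qed
qed

lemma regular_curve_closed_arc:
  assumes L: "L > 0" and hom: "homeomorphism {0..L} c \<sigma> \<sigma>'"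
    and imm: "smooth_immersion {0<..<L} \<sigma>"
    and imm_0: "smooth_immersion {0..<(L/2)\<^sup>2} (\<lambda>x. \<sigma> (sqrt x))"
    and imm_L: "smooth_immersion {0..<(L/2)\<^sup>2} (\<lambda>x. \<sigma> (L - sqrt x))"
  shows "regular_curve_with_boundary c {\<sigma> 0, \<sigma> L}"
  unfolding regular_curve_with_boundary_iff_charts
proof (intro conjI ballI)
  show "{\<sigma> 0, \<sigma> L} \<subseteq> c" using homeomorphism_image1[OF hom] L by auto
  fix p assume "p \<in> c"
  then obtain u where u: "u \<in> {0..L}" "p = \<sigma> u"
    using homeomorphism_image1[OF hom] by blast
  have inj: "inj_on \<sigma> {0..L}" using hom unfolding homeomorphism_def by (metis inj_on_inverseI)
  have L2: "L / 2 > 0" using L by simp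
  consider "u = 0" | "u = L" | "0 < u" "u < L" using u by fastforce
  thus "has_chart c (if p \<in> {\<sigma> 0, \<sigma> L} then {0..<1} else {-1<..<1}) p"
  proof cases
    case 1
    have "(\<lambda>y. 0 + 1 * y) ` {0..<L/2} = {0..L} \<inter> {-1<..<L/2}" using L by auto
    from has_chart_end[OF hom L2 _ this _ smooth_immersion_cong[OF imm_0]]
    show ?thesis using 1 u by simp
  next
    case 2
    have "(\<lambda>y. L + -1 * y) ` {0..<L/2} = {0..L} \<inter> {L/2<..<L+1}"
    proof -
      have "x \<in> (\<lambda>y. L + -1 * y) ` {0..<L/2}" if "x \<in> {0..L} \<inter> {L/2<..<L+1}" for x
        using that by (intro image_eqI[of _ _ "L - x"]) auto
      thus ?thesis by auto
    qed
    from has_chart_end[OF hom L2 _ this _ smooth_immersion_cong[OF imm_L]]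
    show ?thesis using 2 u by simp
  next
    case 3
    define \<delta> where "\<delta> = min u (L - u)"
    have \<delta>: "\<delta> > 0" and sub: "{u - \<delta><..<u + \<delta>} \<subseteq> {0<..<L}" using 3 by (auto simp: \<delta>_def)
    have "has_chart c {-1<..<1} (\<sigma> u)"
      by (rule has_chart_interior[OF hom \<delta> _ smooth_immersion_subset[OF imm sub]]) (use sub in auto)
    moreover have "p \<notin> {\<sigma> 0, \<sigma> L}" using inj_onD[OF inj, of u] 3 u L by fastforce
    ultimately show ?thesis using u by simp
  qed
qed

section \<open>Symmetric arcs and circles\<close>

lemma image_fold_sqrt:
  assumes e: "\<epsilon> > 0" and ev: "\<forall>x\<in>{-\<epsilon><..<\<epsilon>}. w (- x) = w x"
  shows "(\<lambda>x. w (sqrt x)) ` {0..<\<epsilon>\<^sup>2} = w ` {-\<epsilon><..<\<epsilon>}"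
proof
  show "(\<lambda>x. w (sqrt x)) ` {0..<\<epsilon>\<^sup>2} \<subseteq> w ` {-\<epsilon><..<\<epsilon>}"
    using sqrt_mem_symmetric_interval[OF e] by auto
  show "w ` {-\<epsilon><..<\<epsilon>} \<subseteq> (\<lambda>x. w (sqrt x)) ` {0..<\<epsilon>\<^sup>2}"
  proof
    fix p assume "p \<in> w ` {-\<epsilon><..<\<epsilon>}"
    then obtain t where t: "t \<in> {-\<epsilon><..<\<epsilon>}" "p = w t" by blast
    have "w \<bar>t\<bar> = w t" using ev t by (cases "t \<ge> 0") auto
    moreover have "t\<^sup>2 \<in> {0..<\<epsilon>\<^sup>2}"
      using t power_strict_mono[of "\<bar>t\<bar>" \<epsilon> 2] by auto
    ultimately show "p \<in> (\<lambda>x. w (sqrt x)) ` {0..<\<epsilon>\<^sup>2}" using t by (intro image_eqI[of _ _ "t\<^sup>2"]) auto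
  qed
qed

lemma inj_on_fold_sqrt:
  fixes z w :: "real \<Rightarrow> complex"
  assumes e: "\<epsilon> > 0" and inj: "inj_on (\<lambda>x. (z x, w x)) {-\<epsilon><..<\<epsilon>}"
    and eq: "\<forall>x\<in>{-\<epsilon><..<\<epsilon>}. z x ^ 2 = poly f (w x)"
    and sym: "\<forall>x\<in>{-\<epsilon><..<\<epsilon>}. z (- x) = - z x \<and> w (- x) = w x"
  shows "inj_on (\<lambda>x. w (sqrt x)) {0..<\<epsilon>\<^sup>2}"
proof (rule inj_onI)
  fix x y assume x: "x \<in> {0..<\<epsilon>\<^sup>2}" and y: "y \<in> {0..<\<epsilon>\<^sup>2}" and xy: "w (sqrt x) = w (sqrt y)"
  let ?s = "sqrt x" and ?t = "sqrt y"
  have sJ: "?s \<in> {-\<epsilon><..<\<epsilon>}" and tJ: "?t \<in> {-\<epsilon><..<\<epsilon>}"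
    using sqrt_mem_symmetric_interval[OF e] x y by auto
  have "z ?s ^ 2 = z ?t ^ 2" using eq sJ tJ xy by metis
  hence "z ?s = z ?t \<or> z ?s = z (- ?t)" using sym tJ by (simp add: power2_eq_iff)
  moreover have "w ?s = w (- ?t)" using xy sym tJ by simp
  moreover have "- ?t \<in> {-\<epsilon><..<\<epsilon>}" using tJ by auto
  ultimately have "?s = ?t \<or> ?s = - ?t" using inj_onD[OF inj] sJ tJ xy by fastforce
  moreover have "0 \<le> ?s" "0 \<le> ?t" using x y by simp_all
  ultimately have "?s = ?t" by linarith
  thus "x = y" using x y by simp
qed

lemma symmetric_arc_regular_curve:
  fixes z w :: "real \<Rightarrow> complex"
  assumes e: "0 < \<epsilon>" and emb: "smooth_embedding {-\<epsilon><..<\<epsilon>} (\<lambda>x. (z x, w x))"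
    and M: "\<forall>x\<in>{-\<epsilon><..<\<epsilon>}. (z x, w x) \<in> M1 f" and z0: "z 0 = 0"
    and z_nonzero: "\<forall>x\<in>{-\<epsilon><..<\<epsilon>}. x \<noteq> 0 \<longrightarrow> z x \<noteq> 0"
    and sym: "\<forall>x\<in>{-\<epsilon><..<\<epsilon>}. z (- x) = - z x \<and> w (- x) = w x"
  shows "smooth_embedding {0..<\<epsilon>\<^sup>2} (\<lambda>x. w (sqrt x))"
    and "(\<lambda>x. w (sqrt x)) ` {0..<\<epsilon>\<^sup>2} = w ` {-\<epsilon><..<\<epsilon>}"
    and "regular_curve_with_boundary (w ` {-\<epsilon><..<\<epsilon>}) {w 0}"
proof -
  let ?J = "{-\<epsilon><..<\<epsilon>}" and ?S = "{0..<\<epsilon>\<^sup>2}" and ?\<eta> = "\<lambda>x. w (sqrt x)"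
  obtain h where imm: "smooth_immersion ?J (\<lambda>x. (z x, w x))"
    and hom: "homeomorphism ?J ((\<lambda>x. (z x, w x)) ` ?J) (\<lambda>x. (z x, w x)) h"
    using emb smooth_embedding_iff_immersion[of ?J] at_within_Ioo_neq_bot by blast
  have eq: "\<forall>x\<in>?J. z x ^ 2 = poly f (w x)" using M by (simp add: M1_def)
  have ev: "\<forall>x\<in>?J. w (- x) = w x" using sym by blast
  have imm_\<eta>: "smooth_immersion ?S ?\<eta>" by (rule smooth_immersion_fold_sqrt[OF e imm eq z0 z_nonzero ev])
  have inj: "inj_on ?\<eta> ?S"
    by (rule inj_on_fold_sqrt[OF e inj_on_inverseI eq sym]) (rule homeomorphism_apply1[OF hom])
  obtain g where hom_\<eta>: "homeomorphism ?S (?\<eta> ` ?S) ?\<eta> g"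
    using fold_sqrt_homeomorphism[OF e hom eq sym smooth_immersion_continuous_on[OF imm_\<eta>] inj] by blast
  show "smooth_embedding ?S ?\<eta>"
    using imm_\<eta> hom_\<eta> smooth_embedding_iff_immersion[of ?S] at_within_Ico_neq_bot by blast
  show img: "?\<eta> ` ?S = w ` ?J" by (rule image_fold_sqrt[OF e ev])
  from regular_curve_half_open_arc[of "\<epsilon>\<^sup>2" _ ?\<eta> g] hom_\<eta> imm_\<eta> e
  show "regular_curve_with_boundary (w ` ?J) {w 0}" by (simp add: img)
qed

lemma int_multiple_pi_in_open_interval:
  assumes "\<bar>t\<bar> < pi" "t = of_int k * pi"
  shows "t = 0"
proof -
  have "\<bar>of_int k\<bar> * pi < 1 * pi" using assms by (simp add: abs_mult)
  hence "\<bar>k\<bar> < 1" by (simp only: mult_less_cancel_right_pos[OF pi_gt_zero])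
  thus ?thesis using assms(2) by simp
qed

context
  fixes f :: "complex poly" and z w :: "real \<Rightarrow> complex"
  assumes SC: "symmetric_circle f z w"
begin

lemma symmetric_circle_periodic: "periodic_fun_simple z (2 * pi)" "periodic_fun_simple w (2 * pi)"
  using SC unfolding symmetric_circle_def by (simp_all add: periodic_fun_simple_def)

lemma symmetric_circle_odd_even: "z (- u) = - z u" "w (- u) = w u"
  using SC unfolding symmetric_circle_def by simp_all

lemma symmetric_circle_M1: "z u ^ 2 = poly f (w u)"
  using SC unfolding symmetric_circle_def M1_def by simp

lemma symmetric_circle_z_0: "z 0 = 0"
  using symmetric_circle_odd_even(1)[of 0] by simp

lemma symmetric_circle_z_pi: "z pi = 0"
  using symmetric_circle_odd_even(1)[of pi] periodic_fun_simple.plus_period[OF symmetric_circle_periodic(1), of "- pi"]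
  by simp

lemma symmetric_circle_w_reflect_pi: "w (pi - t) = w (pi + t)"
  using symmetric_circle_odd_even(2)[of "pi - t"] periodic_fun_simple.plus_period[OF symmetric_circle_periodic(2), of "t - pi"]
  by (simp add: algebra_simps)

lemma symmetric_circle_z_nonzero:
  assumes "\<bar>t\<bar> < pi" "t \<noteq> 0"
  shows "z t \<noteq> 0" "z (pi + t) \<noteq> 0"
proof -
  have nonzero: "z u \<noteq> 0" if "\<forall>k::int. u \<noteq> of_int k * pi" for u
    using SC that unfolding symmetric_circle_def by blast
  show "z t \<noteq> 0" using int_multiple_pi_in_open_interval[OF assms(1)] assms(2) by (intro nonzero) blast
  have "pi + t \<noteq> of_int k * pi" for k :: int
    using int_multiple_pi_in_open_interval[OF assms(1), of "k - 1"] assms(2) by (auto simp: algebra_simps)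
  thus "z (pi + t) \<noteq> 0" by (intro nonzero) blast
qed

lemma symmetric_circle_inj_on: "inj_on w {0..pi}"
proof (rule inj_onI)
  have inj: "inj_on (\<lambda>u. (z u, w u)) {0..<2 * pi}" using SC unfolding symmetric_circle_def by blast
  fix s t assume s: "s \<in> {0..pi}" and t: "t \<in> {0..pi}" and st: "w s = w t"
  have s2: "s \<in> {0..<2 * pi}" and t2: "t \<in> {0..<2 * pi}"
    using s t pi_gt_zero unfolding atLeastAtMost_iff atLeastLessThan_iff by linarith+
  have "z s ^ 2 = z t ^ 2" using st symmetric_circle_M1 by metis
  hence "z s = z t \<or> z s = - z t" by (simp add: power2_eq_iff)
  thus "s = t"
  proof
    assume "z s = z t"
    thus "s = t" using inj_onD[OF inj _ s2 t2] st by simp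
  next
    assume zst: "z s = - z t"
    show "s = t"
    proof (cases "t = 0")
      case True
      thus ?thesis using zst symmetric_circle_z_0 inj_onD[OF inj _ s2 t2] st by simp
    next
      case False
      have "z (2 * pi - t) = - z t" "w (2 * pi - t) = w t"
        using periodic_fun_simple.plus_period[OF symmetric_circle_periodic(1), of "- t"]
          periodic_fun_simple.plus_period[OF symmetric_circle_periodic(2), of "- t"]
          symmetric_circle_odd_even[of t] by (simp_all add: algebra_simps)
      moreover have "2 * pi - t \<in> {0..<2 * pi}" using t False by auto
      ultimately have "s = 2 * pi - t" using inj_onD[OF inj _ s2] zst st by simp
      thus ?thesis using s t by auto
    qed
  qed
qed

lemma symmetric_circle_range: "range w = w ` {0..pi}"
proof (intro equalityI subsetI)
  fix p assume "p \<in> range w"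
  then obtain u where p: "p = w u" by blast
  define v where "v = u + of_int (- \<lfloor>u / (2 * pi)\<rfloor>) * (2 * pi)"
  interpret periodic_fun_simple w "2 * pi" by (rule symmetric_circle_periodic(2))
  have wv: "w v = p" using plus_of_int[of u "- \<lfloor>u / (2 * pi)\<rfloor>"] p by (simp only: v_def)
  have v: "0 \<le> v" "v < 2 * pi"
    using floor_divide_lower[of "2 * pi" u] floor_divide_upper[of "2 * pi" u]
    by (simp_all add: v_def algebra_simps)
  show "p \<in> w ` {0..pi}"
  proof (cases "v \<le> pi")
    case True
    thus ?thesis using v wv by auto
  next
    case False
    have "w (2 * pi - v) = w v"
      using periodic_fun_simple.plus_period[OF symmetric_circle_periodic(2), of "- v"]
        symmetric_circle_odd_even(2)[of v] by (simp add: algebra_simps)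
    moreover have "2 * pi - v \<in> {0..pi}" using False v by auto
    ultimately show ?thesis using wv by (metis image_eqI)
  qed
qed auto

lemma symmetric_circle_regular_curve: "regular_curve_with_boundary (range w) {w 0, w pi}"
proof -
  have imm: "smooth_immersion UNIV (\<lambda>u. (z u, w u))"
    using SC unfolding symmetric_circle_def smooth_immersion_iff[OF ballI[OF at_neq_bot]] by blast
  have eq: "\<forall>t\<in>J. z t ^ 2 = poly f (w t)" for J using symmetric_circle_M1 by blast
  have "continuous_on UNIV (\<lambda>u. snd (z u, w u))"
    by (intro continuous_intros smooth_immersion_continuous_on[OF imm])
  hence "continuous_on {0..pi} w" using continuous_on_subset by fastforce
  then obtain \<sigma>' where hom: "homeomorphism {0..pi} (range w) w \<sigma>'"
    using homeomorphism_compact[OF compact_Icc _ symmetric_circle_range[symmetric] symmetric_circle_inj_on]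
    by blast
  have z_nonzero: "\<forall>t\<in>{-pi<..<pi}. t \<noteq> 0 \<longrightarrow> z t \<noteq> 0 \<and> z (pi + t) \<noteq> 0"
    using symmetric_circle_z_nonzero by (simp add: abs_less_iff)
  have imm_interior: "smooth_immersion {0<..<pi} w"
    by (rule smooth_immersion_snd_of_M1[OF open_greaterThanLessThan smooth_immersion_subset[OF imm] eq])
       (use z_nonzero in auto)
  have "smooth_immersion {0..<pi\<^sup>2} (\<lambda>x. w (sqrt x))"
    by (rule smooth_immersion_fold_sqrt[OF pi_gt_zero smooth_immersion_subset[OF imm] eq])
       (use z_nonzero symmetric_circle_z_0 symmetric_circle_odd_even(2) in auto)
  hence imm_0: "smooth_immersion {0..<(pi/2)\<^sup>2} (\<lambda>x. w (sqrt x))"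
    by (rule smooth_immersion_subset) (auto simp: power_divide)
  have "smooth_immersion {-pi<..<pi} (\<lambda>t. (z (pi + 1 * t), w (pi + 1 * t)))"
    by (rule smooth_immersion_affine[OF imm]) auto
  hence imm_shift: "smooth_immersion {-pi<..<pi} (\<lambda>t. (z (pi + t), w (pi + t)))" by simp
  have eq_shift: "\<forall>t\<in>{-pi<..<pi}. z (pi + t) ^ 2 = poly f (w (pi + t))"
    using symmetric_circle_M1 by blast
  have "smooth_immersion {0..<pi\<^sup>2} (\<lambda>x. w (pi + sqrt x))"
    by (rule smooth_immersion_fold_sqrt[OF pi_gt_zero imm_shift eq_shift])
       (use z_nonzero symmetric_circle_z_pi symmetric_circle_w_reflect_pi in auto)
  hence imm_pi: "smooth_immersion {0..<(pi/2)\<^sup>2} (\<lambda>x. w (pi - sqrt x))"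
    by (rule smooth_immersion_cong[OF smooth_immersion_subset])
       (auto simp: power_divide symmetric_circle_w_reflect_pi)
  show ?thesis by (rule regular_curve_closed_arc[OF pi_gt_zero hom imm_interior imm_0 imm_pi])
qed

end

theorem lemma3p6:
  fixes f :: "complex poly"
  assumes "simple_zeros f"
  shows "(\<forall>(\<epsilon>::real) (z::real \<Rightarrow> complex) (w::real \<Rightarrow> complex).
            0 < \<epsilon> \<and>
            smooth_embedding {-\<epsilon><..<\<epsilon>} (\<lambda>x. (z x, w x)) \<and>
            (\<forall>x\<in>{-\<epsilon><..<\<epsilon>}. (z x, w x) \<in> M1 f) \<and>
            z 0 = 0 \<and>
            (\<forall>x\<in>{-\<epsilon><..<\<epsilon>}. x \<noteq> 0 \<longrightarrow> z x \<noteq> 0) \<and>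
            (\<forall>x\<in>{-\<epsilon><..<\<epsilon>}. z (- x) = - z x \<and> w (- x) = w x)
          \<longrightarrow> (let c = w ` {-\<epsilon><..<\<epsilon>}; \<eta> = (\<lambda>x. w (sqrt x)) in
                 smooth_embedding {0..<\<epsilon>\<^sup>2} \<eta> \<and> \<eta> ` {0..<\<epsilon>\<^sup>2} = c \<and>
                 regular_curve_with_boundary c {w 0}))
       \<and> (\<forall>(z::real \<Rightarrow> complex) (w::real \<Rightarrow> complex).
            symmetric_circle f z w \<longrightarrow>
            regular_curve_with_boundary (range w) {w 0, w pi})"
proof (intro conjI allI impI)
  fix \<epsilon> :: real and z w :: "real \<Rightarrow> complex"
  assume "0 < \<epsilon> \<and> smooth_embedding {-\<epsilon><..<\<epsilon>} (\<lambda>x. (z x, w x)) \<and>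
    (\<forall>x\<in>{-\<epsilon><..<\<epsilon>}. (z x, w x) \<in> M1 f) \<and> z 0 = 0 \<and>
    (\<forall>x\<in>{-\<epsilon><..<\<epsilon>}. x \<noteq> 0 \<longrightarrow> z x \<noteq> 0) \<and>
    (\<forall>x\<in>{-\<epsilon><..<\<epsilon>}. z (- x) = - z x \<and> w (- x) = w x)"
  thus "let c = w ` {-\<epsilon><..<\<epsilon>}; \<eta> = (\<lambda>x. w (sqrt x)) in
      smooth_embedding {0..<\<epsilon>\<^sup>2} \<eta> \<and> \<eta> ` {0..<\<epsilon>\<^sup>2} = c \<and> regular_curve_with_boundary c {w 0}"
    using symmetric_arc_regular_curve[of \<epsilon> z w f] unfolding Let_def by blast
next
  fix z w :: "real \<Rightarrow> complex"
  assume "symmetric_circle f z w"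
  thus "regular_curve_with_boundary (range w) {w 0, w pi}" by (rule symmetric_circle_regular_curve)
qed

end
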